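(* Let $\mathcal{R}$ be an MSR system satisfying the protocol format assumptions of the context, let $\mathcal{R}_{\mathsf{intf}}$ be its interface model, and let $\mathcal{R}^{\mathsf{role}}_i$ and $\mathcal{R}^e_{\mathsf{env}}$ be the role and environment components obtained by splitting the I/O rules (as in the context). For a fresh name $\mathit{rid}$, let $\mathcal{R}^{\mathsf{role}}_i(\mathit{rid})$ be $\mathcal{R}^{\mathsf{role}}_i$ with the thread identifier fixed to $\mathit{rid}$. Let $\Lambda = \bigcup_i\{a\theta \mid \exists l,r.\ l\xrightarrow{a} r\in\mathcal{R}^i_{\mathsf{io}},\ \mathrm{range}(\theta)\subseteq\mathcal{M}\}$ be the set of all ground instances of synchronization labels. Then $$\mathrm{Tr}\Big(\big(|||_{i,\mathit{rid}}\ \mathcal{R}^{\mathsf{role}}_i(\mathit{rid})\big)\ \|_{\Lambda}\ \mathcal{R}^e_{\mathsf{env}}\Big)\subseteq \mathrm{Tr}(\mathcal{R}_{\mathsf{intf}}).$$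
   Context: Terms and messages. Fix a finite signature $\Sigma$ of function symbols, a set of names $\mathcal{N} = \mathit{fresh} \cup \mathit{pub}$ and a set of variables $\mathcal{V}$; terms are $\mathcal{T} = \mathcal{T}_\Sigma(\mathcal{N}\cup\mathcal{V})$, messages $\mathcal{M}$ are ground terms, and an equational theory $\mathsf{E}$ induces $=_\mathsf{E}$. Facts and MSR. A fact signature $\Sigma_{\mathsf{facts}} = \Sigma_{\mathsf{lin}} \uplus \Sigma_{\mathsf{per}}$ is partitioned into linear and persistent symbols; facts $F(t_1,\dots,t_k)$ are partitioned accordingly into $\mathcal{F}_{\mathsf{lin}}\uplus\mathcal{F}_{\mathsf{per}}$. An MSR rule $l \xrightarrow{a} r$ has multisets of facts $l,a,r$. An MSR system induces an LTS whose states are multisets of ground facts, initial state empty, with transition $S \xrightarrow{a'} (S \setminus^{\#} (l' \cap^{\#} \mathcal{F}_{\mathsf{lin}})) \cup^{\#} r'$ whenever $l \xrightarrow{a} r$ is a rule, $\theta$ a ground instantiation of its variables, $l' \xrightarrow{a'} r' =_\mathsf{E} (l\xrightarrow{a} r)\theta$, $l' \cap^{\#} \mathcal{F}_{\mathsf{lin}} \subseteq^{\#} S$ and $\mathrm{set}(l') \cap \mathcal{F}_{\mathsf{per}} \subseteq \mathrm{set}(S)$ (multiset operations). For an LTS $X$, $\mathrm{Tr}(X)$ is the set of label sequences of finite executions from the initial state. Reserved symbols: $\mathsf{K}\in\Sigma_{\mathsf{per}}$ and $\mathsf{Fr},\mathsf{in},\mathsf{out}\in\Sigma_{\mathsf{lin}}$.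 Format assumptions. $\Sigma_{\mathsf{facts}} = \Sigma_{\mathsf{act}} \uplus \Sigma_{\mathsf{env}} \uplus \biguplus_{1\le i\le n} \Sigma^i_{\mathsf{state}}$. $\Sigma_{\mathsf{env}}$ contains disjoint subsets $\Sigma_{\mathsf{in}},\Sigma_{\mathsf{out}}$ with $\mathsf{Fr},\mathsf{in}\in\Sigma_{\mathsf{in}}$, $\mathsf{out}\in\Sigma_{\mathsf{out}}$, $\mathsf{K}\in\Sigma_{\mathsf{env}}\setminus(\Sigma_{\mathsf{in}}\cup\Sigma_{\mathsf{out}})$, and a setup symbol $\mathsf{Setup}_i\in\Sigma_{\mathsf{in}}$ for each role $i$. $\mathcal{R} = \mathcal{R}_{\mathsf{env}} \uplus \biguplus_{i}\mathcal{R}_i$, where $\mathcal{R}_{\mathsf{env}}$ contains the attacker message deduction rules and the freshness rule. All rule labels use only symbols of $\Sigma_{\mathsf{act}}$. Rules of $\mathcal{R}_{\mathsf{env}}$ use only $\Sigma_{\mathsf{env}}$ symbols in premises and conclusions; a rule producing $\mathsf{Setup}_i$ lies in $\mathcal{R}_{\mathsf{env}}$, produces nothing else and has empty label (a role setup rule). Each rule $l\xrightarrow{a} r\in\mathcal{R}_i$ has premise symbols in $\Sigma^i_{\mathsf{state}}\cup\Sigma_{\mathsf{in}}$, conclusion symbols in $\Sigma^i_{\mathsf{state}}\cup\Sigma_{\mathsf{out}}$, at least one state fact in $r$, and for some $k_i\ge1$ the first $k_i$ arguments of all its state and $\mathsf{Setup}_i$ facts coincide, the first one being a thread identifier $\mathit{rid}$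 of fresh type. Interface model. $\Sigma_{\mathsf{in}}^- = \Sigma_{\mathsf{in}}\setminus\{\mathsf{Setup}_i\}_i$. For $F\in\Sigma^-_{\mathsf{in}}\cup\Sigma_{\mathsf{out}}$ and role $i$ add a buffer symbol $F_i$; let $\Sigma^i_{\mathsf{role}} = \Sigma^i_{\mathsf{state}}\cup\{F_i\}$. $\mathcal{R}'_i$ replaces in rules of $\mathcal{R}_i$ each $F(\bar t)$ with $F\in\Sigma^-_{\mathsf{in}}\cup\Sigma_{\mathsf{out}}$ by $F_i(\mathit{rid},\bar t)$. $\mathcal{R}_{\mathsf{io}}$ contains, for each role $i$, $[F(\bar x)]\xrightarrow{[]}[F_i(\mathit{rid},\bar x)]$ for $F\in\Sigma^-_{\mathsf{in}}$, $[G_i(\mathit{rid},\bar x)]\xrightarrow{[]}[G(\bar x)]$ for $G\in\Sigma_{\mathsf{out}}$, and the role setup rules (removed from $\mathcal{R}_{\mathsf{env}}$, leaving $\mathcal{R}^-_{\mathsf{env}}$). $\mathcal{R}_{\mathsf{intf}} = \mathcal{R}^-_{\mathsf{env}}\uplus\mathcal{R}_{\mathsf{io}}\uplus\biguplus_i\mathcal{R}'_i$. Decomposition. Each I/O rule $\rho$ of role $i$ with variables $\bar y$ (including $\mathit{rid}$) gets a fresh action symbol $\lambda_\rho$ (the synchronization label $\lambda_\rho(\bar y)$), and is split into a role part (in $\mathcal{R}^i_{\mathsf{io}}$) and an environment part (in $\mathcal{R}^e_{\mathsf{io}}$): for the input rule of $F$, role part $[]\xrightarrow{[\lambda_\rho(\bar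 y)]}[F_i(\mathit{rid},\bar x)]$ and environment part $[F(\bar x)]\xrightarrow{[\lambda_\rho(\bar y)]}[]$; for the output rule of $G$, role part $[G_i(\mathit{rid},\bar x)]\xrightarrow{[\lambda_\rho(\bar y)]}[]$ and environment part $[]\xrightarrow{[\lambda_\rho(\bar y)]}[G(\bar x)]$; for a setup rule $l\xrightarrow{[]}[\mathsf{Setup}_i(\bar u)]$, role part $[]\xrightarrow{[\lambda_\rho(\bar y)]}[\mathsf{Setup}_i(\bar u)]$ and environment part $l\xrightarrow{[\lambda_\rho(\bar y)]}[]$. Then $\mathcal{R}^{\mathsf{role}}_i = \mathcal{R}'_i\uplus\mathcal{R}^i_{\mathsf{io}}$ and $\mathcal{R}^e_{\mathsf{env}} = \mathcal{R}^-_{\mathsf{env}}\uplus\mathcal{R}^e_{\mathsf{io}}$. Compositions. $|||_{i,\mathit{rid}} X_{i,\mathit{rid}}$ has as states functions $f$ mapping each $(i,\mathit{rid})$ to a state of $X_{i,\mathit{rid}}$, initial state the pointwise initial states, and transitions $f\xrightarrow{a} f[(i,\mathit{rid})\mapsto S']$ whenever $f(i,\mathit{rid})\xrightarrow{a}S'$ in $X_{i,\mathit{rid}}$. $X_1\|_\Lambda X_2$ has states $(S_1,S_2)$ and transitions $(S_1,S_2)\xrightarrow{a}(S_1',S_2')$ if either (i) $a=[]$ and for some $a'$ with $a'=_\mathsf{E}b$ for some $b\in\Lambda$, $S_1\xrightarrow{a'}S_1'$ and $S_2\xrightarrow{a'}S_2'$; or (ii) $a$ is not $\mathsf{E}$-equal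 to an element of $\Lambda$, $S_1\xrightarrow{a}S_1'$ and $S_2'=S_2$; or (iii) $a$ is not $\mathsf{E}$-equal to an element of $\Lambda$, $S_2\xrightarrow{a}S_2'$ and $S_1'=S_1$. *)

theory Defs
  imports "HOL-Library.Multiset"
begin

datatype vsort = SFresh | SPub | SMsg
type_synonym var = "vsort \<times> nat"

datatype ('f,'n) trm = FreshN 'n | PubN 'n | Var var | App 'f "('f,'n) trm list"

fun vars_trm :: "('f,'n) trm \<Rightarrow> var set" where
  "vars_trm (FreshN a) = {}"
| "vars_trm (PubN a) = {}"
| "vars_trm (Var x) = {x}"
| "vars_trm (App f ts) = \<Union> (set (map vars_trm ts))"

text \<open>Messages are ground terms.\<close>
definition ground :: "('f,'n) trm \<Rightarrow> bool" where
  "ground t \<longleftrightarrow> vars_trm t = {}"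

fun subst :: "(var \<Rightarrow> ('f,'n) trm) \<Rightarrow> ('f,'n) trm \<Rightarrow> ('f,'n) trm" where
  "subst \<theta> (FreshN a) = FreshN a"
| "subst \<theta> (PubN a) = PubN a"
| "subst \<theta> (Var x) = \<theta> x"
| "subst \<theta> (App f ts) = App f (map (subst \<theta>) ts)"

definition ground_subst :: "(var \<Rightarrow> ('f,'n) trm) \<Rightarrow> bool" where
  "ground_subst \<theta> \<longleftrightarrow> (\<forall>x. ground (\<theta> x))
     \<and> (\<forall>m. \<theta> (SFresh, m) \<in> range FreshN) \<and> (\<forall>m. \<theta> (SPub, m) \<in> range PubN)"

definition equational_theory :: "(('f,'n) trm \<Rightarrow> ('f,'n) trm \<Rightarrow> bool) \<Rightarrow> bool" where
  "equational_theory E \<longleftrightarrow> equivp E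
     \<and> (\<forall>f ss ts. list_all2 E ss ts \<longrightarrow> E (App f ss) (App f ts))
     \<and> (\<forall>\<theta> s t. E s t \<longrightarrow> E (subst \<theta> s) (subst \<theta> t))"

datatype ('s,'f,'n) fact = Fact (fsym: 's) (fargs: "('f,'n) trm list")

text \<open>A rule  l --a--> r  is the triple (l, a, r) of multisets of facts.\<close>
type_synonym ('s,'f,'n) rule =
  "('s,'f,'n) fact multiset \<times> ('s,'f,'n) fact multiset \<times> ('s,'f,'n) fact multiset"

definition prem :: "('s,'f,'n) rule \<Rightarrow> ('s,'f,'n) fact multiset" where "prem \<rho> = fst \<rho>"
definition lab :: "('s,'f,'n) rule \<Rightarrow> ('s,'f,'n) fact multiset" where "lab \<rho> = fst (snd \<rho>)"
definition concl :: "('s,'f,'n) rule \<Rightarrow> ('s,'f,'n) fact multiset" where "concl \<rho> = snd (snd \<rho>)"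

definition ground_fact :: "('s,'f,'n) fact \<Rightarrow> bool" where
  "ground_fact f \<longleftrightarrow> (\<forall>t\<in>set (fargs f). ground t)"

definition subst_fact :: "(var \<Rightarrow> ('f,'n) trm) \<Rightarrow> ('s,'f,'n) fact \<Rightarrow> ('s,'f,'n) fact" where
  "subst_fact \<theta> F = Fact (fsym F) (map (subst \<theta>) (fargs F))"

definition subst_ms :: "(var \<Rightarrow> ('f,'n) trm) \<Rightarrow> ('s,'f,'n) fact multiset \<Rightarrow> ('s,'f,'n) fact multiset" where
  "subst_ms \<theta> M = image_mset (subst_fact \<theta>) M"

definition subst_rule :: "(var \<Rightarrow> ('f,'n) trm) \<Rightarrow> ('s,'f,'n) rule \<Rightarrow> ('s,'f,'n) rule" where
  "subst_rule \<theta> \<rho> = (subst_ms \<theta> (prem \<rho>), subst_ms \<theta> (lab \<rho>), subst_ms \<theta> (concl \<rho>))"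

definition vars_fact :: "('s,'f,'n) fact \<Rightarrow> var set" where
  "vars_fact F = \<Union> (set (map vars_trm (fargs F)))"

definition vars_rule :: "('s,'f,'n) rule \<Rightarrow> var set" where
  "vars_rule \<rho> = (\<Union>F\<in>set_mset (prem \<rho> + lab \<rho> + concl \<rho>). vars_fact F)"

definition eq_fact :: "(('f,'n) trm \<Rightarrow> ('f,'n) trm \<Rightarrow> bool) \<Rightarrow> ('s,'f,'n) fact \<Rightarrow> ('s,'f,'n) fact \<Rightarrow> bool" where
  "eq_fact E F G \<longleftrightarrow> fsym F = fsym G \<and> list_all2 E (fargs F) (fargs G)"

definition eq_ms :: "(('f,'n) trm \<Rightarrow> ('f,'n) trm \<Rightarrow> bool) \<Rightarrow> ('s,'f,'n) fact multiset \<Rightarrow> ('s,'f,'n) fact multiset \<Rightarrow> bool" where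
  "eq_ms E M N \<longleftrightarrow> rel_mset (eq_fact E) M N"

text \<open>Linear part of a multiset (per = persistent fact symbols).\<close>
definition lin_part :: "('s \<Rightarrow> bool) \<Rightarrow> ('s,'f,'n) fact multiset \<Rightarrow> ('s,'f,'n) fact multiset" where
  "lin_part per M = filter_mset (\<lambda>F. \<not> per (fsym F)) M"

definition per_part :: "('s \<Rightarrow> bool) \<Rightarrow> ('s,'f,'n) fact multiset \<Rightarrow> ('s,'f,'n) fact multiset" where
  "per_part per M = filter_mset (\<lambda>F. per (fsym F)) M"

datatype ('st,'a) lts = LTS (lts_init: 'st) (lts_step: "'st \<Rightarrow> 'a \<Rightarrow> 'st \<Rightarrow> bool")

inductive reach :: "('st,'a) lts \<Rightarrow> 'a list \<Rightarrow> 'st \<Rightarrow> bool" for X where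
  reach_init: "reach X [] (lts_init X)"
| reach_step: "reach X tr S \<Longrightarrow> lts_step X S a S' \<Longrightarrow> reach X (tr @ [a]) S'"

definition Tr :: "('st,'a) lts \<Rightarrow> 'a list set" where
  "Tr X = {tr. \<exists>S. reach X tr S}"

definition msr_step ::
  "('s \<Rightarrow> bool) \<Rightarrow> (('f,'n) trm \<Rightarrow> ('f,'n) trm \<Rightarrow> bool) \<Rightarrow> ('s,'f,'n) rule set
   \<Rightarrow> ('s,'f,'n) fact multiset \<Rightarrow> ('s,'f,'n) fact multiset \<Rightarrow> ('s,'f,'n) fact multiset \<Rightarrow> bool" where
  "msr_step per E R S a' S' \<longleftrightarrow>
     (\<exists>\<rho>\<in>R. \<exists>\<theta> l' r'. ground_subst \<theta>
        \<and> (\<forall>F\<in>#l' + a' + r'. ground_fact F)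
        \<and> eq_ms E l' (subst_ms \<theta> (prem \<rho>))
        \<and> eq_ms E a' (subst_ms \<theta> (lab \<rho>))
        \<and> eq_ms E r' (subst_ms \<theta> (concl \<rho>))
        \<and> lin_part per l' \<subseteq># S
        \<and> set_mset (per_part per l') \<subseteq> set_mset S
        \<and> S' = (S - lin_part per l') + r')"

definition msr_lts ::
  "('s \<Rightarrow> bool) \<Rightarrow> (('f,'n) trm \<Rightarrow> ('f,'n) trm \<Rightarrow> bool) \<Rightarrow> ('s,'f,'n) rule set
   \<Rightarrow> (('s,'f,'n) fact multiset, ('s,'f,'n) fact multiset) lts" where
  "msr_lts per E R = LTS {#} (msr_step per E R)"

definition interleave :: "'k set \<Rightarrow> ('k \<Rightarrow> ('st,'a) lts) \<Rightarrow> ('k \<Rightarrow> 'st, 'a) lts" where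
  "interleave K X = LTS (\<lambda>k. lts_init (X k))
     (\<lambda>f a f'. \<exists>k\<in>K. \<exists>S'. lts_step (X k) (f k) a S' \<and> f' = f(k := S'))"

text \<open>Synchronous composition  X1 ||_\<Lambda> X2  (labels are multisets, [] is the empty label).\<close>
definition sync ::
  "('a multiset \<Rightarrow> 'a multiset \<Rightarrow> bool) \<Rightarrow> 'a multiset set
   \<Rightarrow> ('s1, 'a multiset) lts \<Rightarrow> ('s2, 'a multiset) lts \<Rightarrow> ('s1 \<times> 's2, 'a multiset) lts" where
  "sync eq \<Lambda> X1 X2 = LTS (lts_init X1, lts_init X2)
     (\<lambda>(S1, S2) a (S1', S2').
        (a = {#} \<and> (\<exists>a'. (\<exists>b\<in>\<Lambda>. eq a' b) \<and> lts_step X1 S1 a' S1' \<and> lts_step X2 S2 a' S2'))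
      \<or> (\<not> (\<exists>b\<in>\<Lambda>. eq a b) \<and> lts_step X1 S1 a S1' \<and> S2' = S2)
      \<or> (\<not> (\<exists>b\<in>\<Lambda>. eq a b) \<and> lts_step X2 S2 a S2' \<and> S1' = S1))"

text \<open>Classification of fact symbols: Sigma_act, Sigma_env, Sigma^i_state.\<close>
datatype symclass = CAct | CEnv | CState nat

definition protocol_format ::
  "nat \<Rightarrow> ('s \<Rightarrow> bool) \<Rightarrow> ('s \<Rightarrow> symclass) \<Rightarrow> 's set \<Rightarrow> 's set \<Rightarrow> 's \<Rightarrow> 's \<Rightarrow> 's \<Rightarrow> 's
   \<Rightarrow> (nat \<Rightarrow> 's) \<Rightarrow> ('s \<Rightarrow> nat) \<Rightarrow> ('s,'f,'n) rule set \<Rightarrow> (nat \<Rightarrow> ('s,'f,'n) rule set) \<Rightarrow> bool" where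
  "protocol_format n per cls Sin Sout K Fr In Out Setup ar Renv Rr \<longleftrightarrow>
     \<comment> \<open>the state symbols are those of roles 1..n\<close>
     (\<forall>s i. cls s = CState i \<longrightarrow> 1 \<le> i \<and> i \<le> n)
     \<comment> \<open>Sigma_in, Sigma_out disjoint subsets of Sigma_env\<close>
   \<and> Sin \<inter> Sout = {} \<and> (\<forall>s\<in>Sin \<union> Sout. cls s = CEnv)
     \<comment> \<open>reserved symbols\<close>
   \<and> per K \<and> \<not> per Fr \<and> \<not> per In \<and> \<not> per Out
   \<and> Fr \<in> Sin \<and> In \<in> Sin \<and> Fr \<noteq> In \<and> Out \<in> Sout
   \<and> cls K = CEnv \<and> K \<notin> Sin \<union> Sout
     \<comment> \<open>setup symbols\<close>
   \<and> (\<forall>i\<in>{1..n}. Setup i \<in> Sin) \<and> inj_on Setup {1..n}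
   \<and> Fr \<notin> Setup ` {1..n} \<and> In \<notin> Setup ` {1..n}
     \<comment> \<open>facts have the arity of their symbol\<close>
   \<and> (\<forall>\<rho>\<in>Renv \<union> (\<Union>i\<in>{1..n}. Rr i). \<forall>F\<in>#prem \<rho> + lab \<rho> + concl \<rho>. length (fargs F) = ar (fsym F))
     \<comment> \<open>R_env contains the freshness rule\<close>
   \<and> (\<exists>x. fst x = SFresh \<and> ({#}, {#}, {#Fact Fr [Var x]#}) \<in> Renv)
     \<comment> \<open>all rule labels use only action symbols\<close>
   \<and> (\<forall>\<rho>\<in>Renv \<union> (\<Union>i\<in>{1..n}. Rr i). \<forall>F\<in>#lab \<rho>. cls (fsym F) = CAct)
     \<comment> \<open>environment rules use only environment symbols in premises and conclusions\<close>
   \<and> (\<forall>\<rho>\<in>Renv. \<forall>F\<in>#prem \<rho> + concl \<rho>. cls (fsym F) = CEnv)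
     \<comment> \<open>role setup rules: lie in R_env, produce a single Setup_i fact (whose first
         argument is a thread-identifier variable of fresh sort), have empty label\<close>
   \<and> (\<forall>\<rho>\<in>Renv \<union> (\<Union>i\<in>{1..n}. Rr i). \<forall>i\<in>{1..n}.
        (\<exists>F\<in>#concl \<rho>. fsym F = Setup i) \<longrightarrow>
          \<rho> \<in> Renv \<and> lab \<rho> = {#}
          \<and> (\<exists>x us. fst x = SFresh \<and> concl \<rho> = {#Fact (Setup i) (Var x # us)#}))
     \<comment> \<open>role rules\<close>
   \<and> (\<exists>k::nat \<Rightarrow> nat. \<forall>i\<in>{1..n}. 1 \<le> k i \<and> (\<forall>\<rho>\<in>Rr i.
        (\<forall>F\<in>#prem \<rho>. cls (fsym F) = CState i \<or> fsym F \<in> Sin)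
      \<and> (\<forall>F\<in>#concl \<rho>. cls (fsym F) = CState i \<or> fsym F \<in> Sout)
      \<and> (\<exists>F\<in>#concl \<rho>. cls (fsym F) = CState i)
      \<and> (\<exists>x ts. fst x = SFresh \<and> length ts = k i \<and> hd ts = Var x \<and>
           (\<forall>F\<in>#prem \<rho> + concl \<rho>. (cls (fsym F) = CState i \<or> fsym F = Setup i)
              \<longrightarrow> take (k i) (fargs F) = ts))))"

text \<open>Extended fact symbols: original symbols, buffer symbols F_i, and the
  synchronization action symbols lambda_rho, indexed by a description of the I/O rule rho.\<close>
datatype ('s,'f,'n) iodesc = IOIn nat 's | IOOut nat 's | IOSetup nat "('s,'f,'n) rule"
datatype ('s,'f,'n) xsym = Orig 's | Buf nat 's | Lam "('s,'f,'n) iodesc"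

type_synonym ('s,'f,'n) xfact = "(('s,'f,'n) xsym, 'f, 'n) fact"
type_synonym ('s,'f,'n) xrule = "(('s,'f,'n) xsym, 'f, 'n) rule"

fun xper :: "('s \<Rightarrow> bool) \<Rightarrow> ('s,'f,'n) xsym \<Rightarrow> bool" where
  "xper per (Orig s) = per s"
| "xper per (Buf i s) = False"
| "xper per (Lam d) = False"

definition lift_fact :: "('s,'f,'n) fact \<Rightarrow> ('s,'f,'n) xfact" where
  "lift_fact F = Fact (Orig (fsym F)) (fargs F)"

definition lift_rule :: "('s,'f,'n) rule \<Rightarrow> ('s,'f,'n) xrule" where
  "lift_rule \<rho> = (image_mset lift_fact (prem \<rho>), image_mset lift_fact (lab \<rho>), image_mset lift_fact (concl \<rho>))"

definition Sin_minus :: "nat \<Rightarrow> 's set \<Rightarrow> (nat \<Rightarrow> 's) \<Rightarrow> 's set" where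
  "Sin_minus n Sin Setup = Sin - Setup ` {1..n}"

definition tid :: "('s \<Rightarrow> symclass) \<Rightarrow> nat \<Rightarrow> ('s,'f,'n) rule \<Rightarrow> var" where
  "tid cls i \<rho> = (SOME x. \<exists>F\<in>#concl \<rho>. cls (fsym F) = CState i \<and> fargs F \<noteq> [] \<and> hd (fargs F) = Var x)"

definition bufferize :: "'s set \<Rightarrow> nat \<Rightarrow> var \<Rightarrow> ('s,'f,'n) fact \<Rightarrow> ('s,'f,'n) xfact" where
  "bufferize B i x F = (if fsym F \<in> B then Fact (Buf i (fsym F)) (Var x # fargs F) else lift_fact F)"

definition Rprime :: "nat \<Rightarrow> ('s \<Rightarrow> symclass) \<Rightarrow> 's set \<Rightarrow> 's set \<Rightarrow> (nat \<Rightarrow> 's)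
   \<Rightarrow> nat \<Rightarrow> ('s,'f,'n) rule \<Rightarrow> ('s,'f,'n) xrule" where
  "Rprime n cls Sin Sout Setup i \<rho> =
     (let B = Sin_minus n Sin Setup \<union> Sout; x = tid cls i \<rho> in
      (image_mset (bufferize B i x) (prem \<rho>), image_mset (bufferize B i x) (lab \<rho>),
       image_mset (bufferize B i x) (concl \<rho>)))"

definition setup_rules :: "(nat \<Rightarrow> 's) \<Rightarrow> ('s,'f,'n) rule set \<Rightarrow> nat \<Rightarrow> ('s,'f,'n) rule set" where
  "setup_rules Setup Renv i = {\<rho>\<in>Renv. \<exists>F\<in>#concl \<rho>. fsym F = Setup i}"

definition Renv_minus :: "nat \<Rightarrow> (nat \<Rightarrow> 's) \<Rightarrow> ('s,'f,'n) rule set \<Rightarrow> ('s,'f,'n) rule set" where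
  "Renv_minus n Setup Renv = Renv - (\<Union>i\<in>{1..n}. setup_rules Setup Renv i)"

definition ridv :: var where "ridv = (SFresh, 0)"
definition xvars :: "nat \<Rightarrow> ('f,'n) trm list" where
  "xvars m = map (\<lambda>j. Var (SMsg, Suc j)) [0..<m]"

definition in_rule :: "('s \<Rightarrow> nat) \<Rightarrow> nat \<Rightarrow> 's \<Rightarrow> ('s,'f,'n) xrule" where
  "in_rule ar i F = ({#Fact (Orig F) (xvars (ar F))#}, {#}, {#Fact (Buf i F) (Var ridv # xvars (ar F))#})"

definition out_rule :: "('s \<Rightarrow> nat) \<Rightarrow> nat \<Rightarrow> 's \<Rightarrow> ('s,'f,'n) xrule" where
  "out_rule ar i G = ({#Fact (Buf i G) (Var ridv # xvars (ar G))#}, {#}, {#Fact (Orig G) (xvars (ar G))#})"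

definition iodescs :: "nat \<Rightarrow> 's set \<Rightarrow> 's set \<Rightarrow> (nat \<Rightarrow> 's) \<Rightarrow> ('s,'f,'n) rule set
    \<Rightarrow> nat \<Rightarrow> ('s,'f,'n) iodesc set" where
  "iodescs n Sin Sout Setup Renv i =
     {IOIn i F | F. F \<in> Sin_minus n Sin Setup} \<union> {IOOut i G | G. G \<in> Sout}
     \<union> IOSetup i ` setup_rules Setup Renv i"

fun io_rule :: "('s \<Rightarrow> nat) \<Rightarrow> ('s,'f,'n) iodesc \<Rightarrow> ('s,'f,'n) xrule" where
  "io_rule ar (IOIn i F) = in_rule ar i F"
| "io_rule ar (IOOut i G) = out_rule ar i G"
| "io_rule ar (IOSetup i \<rho>) = lift_rule \<rho>"

definition R_io :: "nat \<Rightarrow> 's set \<Rightarrow> 's set \<Rightarrow> (nat \<Rightarrow> 's) \<Rightarrow> ('s \<Rightarrow> nat)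
    \<Rightarrow> ('s,'f,'n) rule set \<Rightarrow> ('s,'f,'n) xrule set" where
  "R_io n Sin Sout Setup ar Renv = (\<Union>i\<in>{1..n}. io_rule ar ` iodescs n Sin Sout Setup Renv i)"

definition R_intf :: "nat \<Rightarrow> ('s \<Rightarrow> symclass) \<Rightarrow> 's set \<Rightarrow> 's set \<Rightarrow> (nat \<Rightarrow> 's) \<Rightarrow> ('s \<Rightarrow> nat)
    \<Rightarrow> ('s,'f,'n) rule set \<Rightarrow> (nat \<Rightarrow> ('s,'f,'n) rule set) \<Rightarrow> ('s,'f,'n) xrule set" where
  "R_intf n cls Sin Sout Setup ar Renv Rr =
     lift_rule ` Renv_minus n Setup Renv \<union> R_io n Sin Sout Setup ar Renv
     \<union> (\<Union>i\<in>{1..n}. Rprime n cls Sin Sout Setup i ` Rr i)"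

definition yvars :: "('s,'f,'n) xrule \<Rightarrow> var list" where
  "yvars \<rho> = (SOME ys. distinct ys \<and> set ys = vars_rule \<rho>)"

definition lam_label :: "('s \<Rightarrow> nat) \<Rightarrow> ('s,'f,'n) iodesc \<Rightarrow> ('s,'f,'n) xfact multiset" where
  "lam_label ar d = {#Fact (Lam d) (map Var (yvars (io_rule ar d)))#}"

fun role_io :: "('s \<Rightarrow> nat) \<Rightarrow> ('s,'f,'n) iodesc \<Rightarrow> ('s,'f,'n) xrule" where
  "role_io ar (IOIn i F) = ({#}, lam_label ar (IOIn i F), concl (in_rule ar i F))"
| "role_io ar (IOOut i G) = (prem (out_rule ar i G), lam_label ar (IOOut i G), {#})"
| "role_io ar (IOSetup i \<rho>) = ({#}, lam_label ar (IOSetup i \<rho>), concl (lift_rule \<rho>))"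

fun env_io :: "('s \<Rightarrow> nat) \<Rightarrow> ('s,'f,'n) iodesc \<Rightarrow> ('s,'f,'n) xrule" where
  "env_io ar (IOIn i F) = (prem (in_rule ar i F), lam_label ar (IOIn i F), {#})"
| "env_io ar (IOOut i G) = ({#}, lam_label ar (IOOut i G), concl (out_rule ar i G))"
| "env_io ar (IOSetup i \<rho>) = (prem (lift_rule \<rho>), lam_label ar (IOSetup i \<rho>), {#})"

definition R_io_role :: "nat \<Rightarrow> 's set \<Rightarrow> 's set \<Rightarrow> (nat \<Rightarrow> 's) \<Rightarrow> ('s \<Rightarrow> nat)
    \<Rightarrow> ('s,'f,'n) rule set \<Rightarrow> nat \<Rightarrow> ('s,'f,'n) xrule set" where
  "R_io_role n Sin Sout Setup ar Renv i = role_io ar ` iodescs n Sin Sout Setup Renv i"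

definition R_env_e :: "nat \<Rightarrow> 's set \<Rightarrow> 's set \<Rightarrow> (nat \<Rightarrow> 's) \<Rightarrow> ('s \<Rightarrow> nat)
    \<Rightarrow> ('s,'f,'n) rule set \<Rightarrow> ('s,'f,'n) xrule set" where
  "R_env_e n Sin Sout Setup ar Renv =
     lift_rule ` Renv_minus n Setup Renv
     \<union> (\<Union>i\<in>{1..n}. env_io ar ` iodescs n Sin Sout Setup Renv i)"

fun tid_io :: "('s,'f,'n) iodesc \<Rightarrow> var" where
  "tid_io (IOIn i F) = ridv"
| "tid_io (IOOut i G) = ridv"
| "tid_io (IOSetup i \<rho>) = (SOME x. \<exists>F\<in>#concl \<rho>. fargs F \<noteq> [] \<and> hd (fargs F) = Var x)"

definition R_role_tid :: "nat \<Rightarrow> ('s \<Rightarrow> symclass) \<Rightarrow> 's set \<Rightarrow> 's set \<Rightarrow> (nat \<Rightarrow> 's) \<Rightarrow> ('s \<Rightarrow> nat)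
    \<Rightarrow> ('s,'f,'n) rule set \<Rightarrow> (nat \<Rightarrow> ('s,'f,'n) rule set) \<Rightarrow> nat \<Rightarrow> (('s,'f,'n) xrule \<times> var) set" where
  "R_role_tid n cls Sin Sout Setup ar Renv Rr i =
     {(Rprime n cls Sin Sout Setup i \<rho>, tid cls i \<rho>) | \<rho>. \<rho> \<in> Rr i}
     \<union> {(role_io ar d, tid_io d) | d. d \<in> iodescs n Sin Sout Setup Renv i}"

definition R_role :: "nat \<Rightarrow> ('s \<Rightarrow> symclass) \<Rightarrow> 's set \<Rightarrow> 's set \<Rightarrow> (nat \<Rightarrow> 's) \<Rightarrow> ('s \<Rightarrow> nat)
    \<Rightarrow> ('s,'f,'n) rule set \<Rightarrow> (nat \<Rightarrow> ('s,'f,'n) rule set) \<Rightarrow> nat \<Rightarrow> ('s,'f,'n) xrule set" where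
  "R_role n cls Sin Sout Setup ar Renv Rr i = fst ` R_role_tid n cls Sin Sout Setup ar Renv Rr i"

definition fix_tid :: "var \<Rightarrow> 'n \<Rightarrow> var \<Rightarrow> ('f,'n) trm" where
  "fix_tid x rid = (\<lambda>y. if y = x then FreshN rid else Var y)"

definition R_role_rid :: "nat \<Rightarrow> ('s \<Rightarrow> symclass) \<Rightarrow> 's set \<Rightarrow> 's set \<Rightarrow> (nat \<Rightarrow> 's) \<Rightarrow> ('s \<Rightarrow> nat)
    \<Rightarrow> ('s,'f,'n) rule set \<Rightarrow> (nat \<Rightarrow> ('s,'f,'n) rule set) \<Rightarrow> nat \<Rightarrow> 'n \<Rightarrow> ('s,'f,'n) xrule set" where
  "R_role_rid n cls Sin Sout Setup ar Renv Rr i rid =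
     {subst_rule (fix_tid x rid) \<rho> | \<rho> x. (\<rho>, x) \<in> R_role_tid n cls Sin Sout Setup ar Renv Rr i}"

definition Lambda :: "nat \<Rightarrow> 's set \<Rightarrow> 's set \<Rightarrow> (nat \<Rightarrow> 's) \<Rightarrow> ('s \<Rightarrow> nat)
    \<Rightarrow> ('s,'f,'n) rule set \<Rightarrow> ('s,'f,'n) xfact multiset set" where
  "Lambda n Sin Sout Setup ar Renv =
     {subst_ms \<theta> (lab \<rho>) | \<rho> \<theta>. \<rho> \<in> (\<Union>i\<in>{1..n}. R_io_role n Sin Sout Setup ar Renv i)
                              \<and> (\<forall>x. ground (\<theta> x))}"

end

(*
  A state of the composition consists of the local states f (i, rid) of all threads and the
  environment state S; it is simulated by the single multiset S + (SUM k. f k) of the interface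
  model. An unsynchronised role step is an instance of a rule of R'_i, an unsynchronised
  environment step one of R^-_env, and both keep their label. In a synchronised step the role
  part and the environment part of the same I/O rule rho fire with E-equal labels
  lambda_rho(y). Since y lists all variables of rho, the two instantiations agree up to E on
  every variable, so the two parts together form one unlabelled instance of rho itself.
*)

theory Submission
  imports Defs "HOL-Library.Groups_Big_Fun"
begin

lemma rel_mset_plus:
  assumes "rel_mset R M N" and "rel_mset R M' N'"
  shows "rel_mset R (M + M') (N + N')"
  using assms by (induction rule: rel_mset_induct) (auto intro: rel_mset_Plus)

lemma rel_mset_singleton_iff: "rel_mset R {#a#} {#b#} \<longleftrightarrow> R a b"
  using msed_rel_invL[of R a "{#}" "{#b#}"] rel_mset_Plus[of R a b "{#}" "{#}"]
  by (auto simp: rel_mset_Zero)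

lemma Sum_any_fun_upd_split:
  fixes f :: "'k \<Rightarrow> 'a::comm_monoid_add"
  assumes "finite {k. f k \<noteq> 0}"
  shows "Sum_any f = f k + Sum_any (f(k := 0))"
    and "Sum_any (f(k := x)) = x + Sum_any (f(k := 0))"
proof -
  have fin: "finite {j. (f(k := 0)) j \<noteq> 0}"
    using assms by (rule rev_finite_subset) auto
  have upd: "Sum_any ((f(k := 0))(k := y)) = y + Sum_any (f(k := 0))" for y
    by (rule Sum_any.update[OF fin]) simp
  show "Sum_any f = f k + Sum_any (f(k := 0))"
    using upd[of "f k"] by simp
  show "Sum_any (f(k := x)) = x + Sum_any (f(k := 0))"
    using upd[of x] by simp
qed

lemma Tr_subset_if_simulation:
  assumes init: "Rel (lts_init X) (lts_init Y)"
    and step: "\<And>s t a s'. Rel s t \<Longrightarrow> lts_step X s a s' \<Longrightarrow> \<exists>t'. Rel s' t' \<and> lts_step Y t a t'"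
  shows "Tr X \<subseteq> Tr Y"
proof -
  have "\<exists>t. Rel s t \<and> reach Y tr t" if "reach X tr s" for tr s
    using that
  proof (induction rule: reach.induct)
    case reach_init
    show ?case using init reach.reach_init by blast
  next
    case (reach_step tr s a s')
    then obtain t where "Rel s t" "reach Y tr t" by blast
    moreover obtain t' where "Rel s' t'" "lts_step Y t a t'"
      using step[OF \<open>Rel s t\<close> \<open>lts_step X s a s'\<close>] by blast
    ultimately show ?case by (metis reach.reach_step)
  qed
  then show ?thesis unfolding Tr_def by auto
qed

lemma subst_subst: "subst \<theta> (subst \<sigma> t) = subst (\<lambda>v. subst \<theta> (\<sigma> v)) t"
  by (induction t) auto

lemma subst_ms_subst_ms: "subst_ms \<theta> (subst_ms \<sigma> M) = subst_ms (\<lambda>v. subst \<theta> (\<sigma> v)) M"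
  unfolding subst_ms_def subst_fact_def by (simp add: multiset.map_comp comp_def subst_subst)

lemma fsym_subst_ms [simp]: "image_mset fsym (subst_ms \<theta> M) = image_mset fsym M"
  by (simp add: subst_ms_def subst_fact_def multiset.map_comp comp_def)

lemma eq_ms_fsym:
  assumes "eq_ms E M N"
  shows "image_mset fsym M = image_mset fsym N"
proof -
  from assms have "rel_mset (\<lambda>F G. fsym F = fsym G) M N"
    unfolding eq_ms_def by (rule multiset.rel_mono_strong) (simp add: eq_fact_def)
  then have "rel_mset (=) (image_mset fsym M) (image_mset fsym N)"
    by (simp add: multiset.rel_map)
  then show ?thesis
    by (simp add: multiset.rel_eq)
qed

lemma finite_vars_trm: "finite (vars_trm t)"
  by (induction t) auto

lemma set_yvars: "set (yvars \<rho>) = vars_rule \<rho>"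
proof -
  have "finite (vars_rule \<rho>)"
    by (simp add: vars_rule_def vars_fact_def finite_vars_trm)
  then show ?thesis
    unfolding yvars_def by (metis (mono_tags, lifting) finite_distinct_list someI_ex)
qed

section \<open>Single rule instances\<close>

definition rule_step ::
  "('s \<Rightarrow> bool) \<Rightarrow> (('f,'n) trm \<Rightarrow> ('f,'n) trm \<Rightarrow> bool) \<Rightarrow> ('s,'f,'n) rule \<Rightarrow> (var \<Rightarrow> ('f,'n) trm)
   \<Rightarrow> ('s,'f,'n) fact multiset \<Rightarrow> ('s,'f,'n) fact multiset \<Rightarrow> ('s,'f,'n) fact multiset \<Rightarrow> bool" where
  "rule_step per E \<rho> \<theta> S a' S' \<longleftrightarrow>
     (\<exists>l' r'. (\<forall>F\<in>#l' + a' + r'. ground_fact F)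
        \<and> eq_ms E l' (subst_ms \<theta> (prem \<rho>))
        \<and> eq_ms E a' (subst_ms \<theta> (lab \<rho>))
        \<and> eq_ms E r' (subst_ms \<theta> (concl \<rho>))
        \<and> lin_part per l' \<subseteq># S
        \<and> set_mset (per_part per l') \<subseteq> set_mset S
        \<and> S' = (S - lin_part per l') + r')"

lemma msr_step_iff_rule_step:
  "msr_step per E R S a S' \<longleftrightarrow> (\<exists>\<rho>\<in>R. \<exists>\<theta>. ground_subst \<theta> \<and> rule_step per E \<rho> \<theta> S a S')"
  unfolding msr_step_def rule_step_def by blast

lemma rule_step_frame:
  assumes "rule_step per E \<rho> \<theta> S a S'"
  shows "rule_step per E \<rho> \<theta> (S + T) a (S' + T)"
proof -
  from assms obtain l' r' where "\<forall>F\<in>#l' + a + r'. ground_fact F"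
    and "eq_ms E l' (subst_ms \<theta> (prem \<rho>))" "eq_ms E a (subst_ms \<theta> (lab \<rho>))"
      "eq_ms E r' (subst_ms \<theta> (concl \<rho>))"
    and "lin_part per l' \<subseteq># S" "set_mset (per_part per l') \<subseteq> set_mset S"
      "S' = S - lin_part per l' + r'"
    unfolding rule_step_def by blast
  then show ?thesis
    unfolding rule_step_def
    by (intro exI[of _ l'] exI[of _ r']) (auto simp: subset_mset.add_increasing2 mset_subset_eq_exists_conv)
qed

lemma msr_step_frame:
  assumes "msr_step per E R S a S'"
  shows "msr_step per E R (S + T) a (S' + T)"
  using assms rule_step_frame unfolding msr_step_iff_rule_step by blast

lemma rule_step_fsym_lab:
  assumes "rule_step per E \<rho> \<theta> S a S'"
  shows "image_mset fsym a = image_mset fsym (lab \<rho>)"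
  using assms eq_ms_fsym unfolding rule_step_def by fastforce

lemma rule_step_subst_rule:
  "rule_step per E (subst_rule \<sigma> \<rho>) \<theta> = rule_step per E \<rho> (\<lambda>v. subst \<theta> (\<sigma> v))"
  by (simp add: fun_eq_iff rule_step_def subst_rule_def prem_def lab_def concl_def subst_ms_subst_ms)

lemma rule_step_merge:
  assumes "rule_step per E \<rho>1 \<theta> S1 a1 S1'" and "rule_step per E \<rho>2 \<theta> S2 a2 S2'"
    and "prem \<rho> = prem \<rho>1 + prem \<rho>2" and "concl \<rho> = concl \<rho>1 + concl \<rho>2" and "lab \<rho> = {#}"
  shows "rule_step per E \<rho> \<theta> (S1 + S2) {#} (S1' + S2')"
proof -
  from assms(1) obtain l1 r1 where g1: "\<forall>F\<in>#l1 + a1 + r1. ground_fact F"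
    and e1: "eq_ms E l1 (subst_ms \<theta> (prem \<rho>1))" "eq_ms E r1 (subst_ms \<theta> (concl \<rho>1))"
    and s1: "lin_part per l1 \<subseteq># S1" "set_mset (per_part per l1) \<subseteq> set_mset S1"
      "S1' = S1 - lin_part per l1 + r1"
    unfolding rule_step_def by blast
  from assms(2) obtain l2 r2 where g2: "\<forall>F\<in>#l2 + a2 + r2. ground_fact F"
    and e2: "eq_ms E l2 (subst_ms \<theta> (prem \<rho>2))" "eq_ms E r2 (subst_ms \<theta> (concl \<rho>2))"
    and s2: "lin_part per l2 \<subseteq># S2" "set_mset (per_part per l2) \<subseteq> set_mset S2"
      "S2' = S2 - lin_part per l2 + r2"
    unfolding rule_step_def by blast
  have "eq_ms E (l1 + l2) (subst_ms \<theta> (prem \<rho>))" "eq_ms E (r1 + r2) (subst_ms \<theta> (concl \<rho>))"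
    using e1 e2 assms(3,4) by (simp_all add: eq_ms_def subst_ms_def rel_mset_plus)
  moreover have "eq_ms E {#} (subst_ms \<theta> (lab \<rho>))"
    using assms(5) by (simp add: eq_ms_def subst_ms_def)
  moreover have "lin_part per (l1 + l2) = lin_part per l1 + lin_part per l2"
    and "per_part per (l1 + l2) = per_part per l1 + per_part per l2"
    by (simp_all add: lin_part_def per_part_def)
  moreover obtain T1 T2 where "S1 = lin_part per l1 + T1" "S2 = lin_part per l2 + T2"
    using s1(1) s2(1) by (metis subset_mset.le_iff_add)
  ultimately show ?thesis
    unfolding rule_step_def using g1 g2 s1(2,3) s2(2,3)
    by (intro exI[of _ "l1 + l2"] exI[of _ "r1 + r2"]) (auto simp: algebra_simps)
qed

section \<open>Instantiations that agree up to E\<close>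

context
  fixes E :: "('f,'n) trm \<Rightarrow> ('f,'n) trm \<Rightarrow> bool"
  assumes E: "equational_theory E"
begin

lemma equivp_eq_fact: "equivp (eq_fact E)"
proof -
  have "reflp E" "symp E" "transp E"
    using E by (simp_all add: equational_theory_def equivp_reflp_symp_transp)
  then have "reflp (list_all2 E)" "symp (list_all2 E)" "transp (list_all2 E)"
    by (simp_all add: list.rel_reflp list.rel_symp list.rel_transp)
  then show ?thesis
    unfolding equivp_reflp_symp_transp eq_fact_def reflp_def symp_def transp_def by metis
qed

lemma equivp_eq_ms: "equivp (eq_ms E)"
  using equivp_eq_fact unfolding eq_ms_def equivp_reflp_symp_transp
  by (blast intro: multiset.rel_reflp multiset.rel_symp multiset.rel_transp)

lemma eq_ms_sym: "eq_ms E M N \<Longrightarrow> eq_ms E N M"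
  using equivp_eq_ms by (rule equivp_symp)

lemma eq_ms_trans: "eq_ms E M N \<Longrightarrow> eq_ms E N P \<Longrightarrow> eq_ms E M P"
  using equivp_eq_ms by (rule equivp_transp)

lemma subst_cong_E:
  assumes "\<And>v. v \<in> vars_trm t \<Longrightarrow> E (\<theta>1 v) (\<theta>2 v)"
  shows "E (subst \<theta>1 t) (subst \<theta>2 t)"
  using assms
proof (induction t)
  case (App f ts)
  then have "list_all2 E (map (subst \<theta>1) ts) (map (subst \<theta>2) ts)"
    by (auto simp: list.rel_map intro!: list.rel_refl_strong)
  then show ?case
    using E by (simp add: equational_theory_def)
qed (use E in \<open>auto simp: equational_theory_def equivp_reflp\<close>)

lemma subst_ms_cong_E:
  assumes "\<And>v. v \<in> (\<Union>F\<in>set_mset M. vars_fact F) \<Longrightarrow> E (\<theta>1 v) (\<theta>2 v)"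
  shows "eq_ms E (subst_ms \<theta>1 M) (subst_ms \<theta>2 M)"
  unfolding eq_ms_def subst_ms_def multiset.rel_map
proof (rule multiset.rel_refl_strong)
  fix F assume "F \<in># M"
  with assms show "eq_fact E (subst_fact \<theta>1 F) (subst_fact \<theta>2 F)"
    by (auto simp: eq_fact_def subst_fact_def vars_fact_def list.rel_map
        intro!: list.rel_refl_strong subst_cong_E)
qed

lemma rule_step_cong_E:
  assumes "\<And>v. v \<in> vars_rule \<rho> \<Longrightarrow> E (\<theta>1 v) (\<theta>2 v)"
    and "rule_step per E \<rho> \<theta>1 S a S'"
  shows "rule_step per E \<rho> \<theta>2 S a S'"
proof -
  have "eq_ms E (subst_ms \<theta>1 M) (subst_ms \<theta>2 M)" if "M \<in> {prem \<rho>, lab \<rho>, concl \<rho>}" for M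
    using that by (intro subst_ms_cong_E assms(1)) (auto simp: vars_rule_def)
  with assms(2) show ?thesis
    unfolding rule_step_def by (blast intro: eq_ms_trans)
qed

end

section \<open>The decomposition into role and environment rules\<close>

lemma lab_role_io: "lab (role_io ar d) = lam_label ar d"
  by (cases d) (simp_all add: lab_def)

lemma lab_env_io: "lab (env_io ar d) = lam_label ar d"
  by (cases d) (simp_all add: lab_def)

lemma prem_io_rule_split: "prem (io_rule ar d) = prem (role_io ar d) + prem (env_io ar d)"
  by (cases d) (simp_all add: in_rule_def out_rule_def prem_def concl_def)

lemma concl_io_rule_split: "concl (io_rule ar d) = concl (role_io ar d) + concl (env_io ar d)"
  by (cases d) (simp_all add: in_rule_def out_rule_def prem_def concl_def)

lemma fsym_lam_label [simp]: "image_mset fsym (lam_label ar d) = {#Lam d#}"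
  by (simp add: lam_label_def)

lemma vars_lam_label: "(\<Union>F\<in>set_mset (lam_label ar d). vars_fact F) = vars_rule (io_rule ar d)"
  by (simp add: lam_label_def vars_fact_def set_yvars)

lemma vars_rule_role_io: "vars_rule (role_io ar d) \<subseteq> vars_rule (io_rule ar d)"
  using vars_lam_label[of ar d]
  by (auto simp: vars_rule_def lab_role_io prem_io_rule_split concl_io_rule_split)

lemma eq_ms_lam_label_agree:
  assumes "eq_ms E (subst_ms \<theta>1 (lam_label ar d)) (subst_ms \<theta>2 (lam_label ar d))"
    and "v \<in> vars_rule (io_rule ar d)"
  shows "E (\<theta>1 v) (\<theta>2 v)"
proof -
  have "list_all2 E (map \<theta>1 (yvars (io_rule ar d))) (map \<theta>2 (yvars (io_rule ar d)))"
    using assms(1)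
    by (simp add: lam_label_def subst_ms_def subst_fact_def comp_def eq_ms_def
        rel_mset_singleton_iff eq_fact_def)
  then show ?thesis
    using assms(2) by (simp add: list.rel_map list_all2_same set_yvars)
qed

lemma Lam_notin_lab_Rprime: "Lam d \<notin># image_mset fsym (lab (Rprime n cls Sin Sout Setup i \<rho>))"
  by (auto simp: Rprime_def Let_def lab_def bufferize_def lift_fact_def)

lemma Lam_notin_lab_lift_rule: "Lam d \<notin># image_mset fsym (lab (lift_rule \<rho>))"
  by (auto simp: lift_rule_def lab_def lift_fact_def)

lemma fsym_Lambda:
  assumes "b \<in> Lambda n Sin Sout Setup ar Renv"
  obtains d where "image_mset fsym b = {#Lam d#}"
  using assms unfolding Lambda_def R_io_role_def by (auto simp: lab_role_io)

lemma subst_lam_label_in_Lambda: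
  assumes "i \<in> {1..n}" and "d \<in> iodescs n Sin Sout Setup Renv i" and "\<forall>x. ground (\<theta> x)"
  shows "subst_ms \<theta> (lam_label ar d) \<in> Lambda n Sin Sout Setup ar Renv"
  using assms unfolding Lambda_def R_io_role_def lab_role_io[symmetric] by blast

lemma rule_step_not_sync_label:
  assumes "rule_step per E \<rho> \<theta> S a S'" and "\<And>d. Lam d \<notin># image_mset fsym (lab \<rho>)"
  shows "\<not> (\<exists>b\<in>Lambda n Sin Sout Setup ar Renv. eq_ms E a b)"
proof
  assume "\<exists>b\<in>Lambda n Sin Sout Setup ar Renv. eq_ms E a b"
  then obtain b d where "eq_ms E a b" "image_mset fsym b = {#Lam d#}"
    by (blast elim: fsym_Lambda)
  then have "image_mset fsym (lab \<rho>) = {#Lam d#}"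
    using rule_step_fsym_lab[OF assms(1)] eq_ms_fsym by metis
  with assms(2)[of d] show False by simp
qed

lemma ground_comp_fix_tid:
  assumes "ground_subst \<theta>"
  shows "ground (subst \<theta> (fix_tid x rid v))"
  using assms by (cases v) (auto simp: fix_tid_def ground_subst_def ground_def)

lemma ground_subst_comp_fix_tid:
  assumes "ground_subst \<theta>" and "fst x = SFresh"
  shows "ground_subst (\<lambda>v. subst \<theta> (fix_tid x rid v))"
  using assms by (auto simp: fix_tid_def ground_subst_def ground_def)

lemma tid_eqI:
  assumes "\<exists>F\<in>#concl \<rho>. cls (fsym F) = CState i"
    and "\<And>F. F \<in># concl \<rho> \<Longrightarrow> cls (fsym F) = CState i \<Longrightarrow> fargs F \<noteq> [] \<and> hd (fargs F) = Var x"
  shows "tid cls i \<rho> = x"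
proof -
  have "\<exists>y. \<exists>F\<in>#concl \<rho>. cls (fsym F) = CState i \<and> fargs F \<noteq> [] \<and> hd (fargs F) = Var y"
    using assms by blast
  then have "\<exists>F\<in>#concl \<rho>. cls (fsym F) = CState i \<and> fargs F \<noteq> [] \<and> hd (fargs F) = Var (tid cls i \<rho>)"
    unfolding tid_def by (rule someI_ex)
  with assms(2) show ?thesis by fastforce
qed

section \<open>Simulation of the composition by the interface model\<close>

lemma msr_step_thread_update:
  assumes "finite {k. f k \<noteq> {#}}" and "msr_step per E R (f k + S) a (T + S')"
  shows "finite {j. (f(k := T)) j \<noteq> {#}}"
    and "msr_step per E R (S + Sum_any f) a (S' + Sum_any (f(k := T)))"
proof -
  show "finite {j. (f(k := T)) j \<noteq> {#}}"
    by (rule finite_subset[of _ "insert k {j. f j \<noteq> {#}}"]) (use assms(1) in auto)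
  let ?rest = "Sum_any (f(k := {#}))"
  have "msr_step per E R (f k + S + ?rest) a (T + S' + ?rest)"
    using assms(2) by (rule msr_step_frame)
  moreover have "f k + S + ?rest = S + Sum_any f" and "T + S' + ?rest = S' + Sum_any (f(k := T))"
    by (simp_all only: Sum_any_fun_upd_split(1)[OF assms(1), of k]
        Sum_any_fun_upd_split(2)[OF assms(1), of k T] ac_simps)
  ultimately show "msr_step per E R (S + Sum_any f) a (S' + Sum_any (f(k := T)))"
    by (simp only:)
qed

text \<open>Only finitely many
  threads ever leave their empty initial state; the finiteness invariant keeps \<open>Sum_any\<close> away
  from its junk value \<open>0\<close> on infinitely supported families.\<close>
definition merged_state :: "('k \<Rightarrow> 'a multiset) \<times> 'a multiset \<Rightarrow> 'a multiset \<Rightarrow> bool" where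
  "merged_state s S\<^sub>0 \<longleftrightarrow> finite {k. fst s k \<noteq> {#}} \<and> S\<^sub>0 = snd s + Sum_any (fst s)"

locale msr_protocol =
  fixes n :: nat
    and per :: "'s \<Rightarrow> bool"
    and cls :: "'s \<Rightarrow> symclass"
    and Sin Sout :: "'s set"
    and K Fr In Out :: 's
    and Setup :: "nat \<Rightarrow> 's"
    and ar :: "'s \<Rightarrow> nat"
    and Renv :: "('s,'f,'n) rule set"
    and Rr :: "nat \<Rightarrow> ('s,'f,'n) rule set"
    and E :: "('f,'n) trm \<Rightarrow> ('f,'n) trm \<Rightarrow> bool"
  assumes E: "equational_theory E"
    and pf: "protocol_format n per cls Sin Sout K Fr In Out Setup ar Renv Rr"
begin

abbreviation "Rintf \<equiv> R_intf n cls Sin Sout Setup ar Renv Rr"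

abbreviation "sync_label a \<equiv> \<exists>b\<in>Lambda n Sin Sout Setup ar Renv. eq_ms E a b"

lemma tid_fresh:
  assumes "i \<in> {1..n}" and "\<rho> \<in> Rr i"
  shows "fst (tid cls i \<rho>) = SFresh"
proof -
  from pf obtain k :: "nat \<Rightarrow> nat" where k: "\<forall>i\<in>{1..n}. 1 \<le> k i \<and> (\<forall>\<rho>\<in>Rr i.
        (\<forall>F\<in>#prem \<rho>. cls (fsym F) = CState i \<or> fsym F \<in> Sin)
      \<and> (\<forall>F\<in>#concl \<rho>. cls (fsym F) = CState i \<or> fsym F \<in> Sout)
      \<and> (\<exists>F\<in>#concl \<rho>. cls (fsym F) = CState i)
      \<and> (\<exists>x ts. fst x = SFresh \<and> length ts = k i \<and> hd ts = Var x \<and>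
           (\<forall>F\<in>#prem \<rho> + concl \<rho>. (cls (fsym F) = CState i \<or> fsym F = Setup i)
              \<longrightarrow> take (k i) (fargs F) = ts)))"
    unfolding protocol_format_def by (elim conjE exE) blast
  with assms have "1 \<le> k i" and state: "\<exists>F\<in>#concl \<rho>. cls (fsym F) = CState i"
    by blast+
  from k assms obtain x ts where x: "fst x = SFresh" "length ts = k i" "hd ts = Var x"
    and prefix: "\<forall>F\<in>#prem \<rho> + concl \<rho>. (cls (fsym F) = CState i \<or> fsym F = Setup i)
                   \<longrightarrow> take (k i) (fargs F) = ts"
    by blast
  have "tid cls i \<rho> = x"
  proof (rule tid_eqI[OF state])
    fix F assume "F \<in># concl \<rho>" and "cls (fsym F) = CState i"
    with prefix have take: "take (k i) (fargs F) = ts" by auto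
    moreover have "ts \<noteq> []" using \<open>1 \<le> k i\<close> x(2) by auto
    ultimately have "fargs F \<noteq> []" by auto
    moreover have "hd (fargs F) = hd ts" using take \<open>1 \<le> k i\<close> hd_take[of "k i" "fargs F"] by simp
    ultimately show "fargs F \<noteq> [] \<and> hd (fargs F) = Var x" using x(3) by simp
  qed
  with x(1) show ?thesis by simp
qed

lemma lab_io_rule:
  assumes "i \<in> {1..n}" and "d \<in> iodescs n Sin Sout Setup Renv i"
  shows "lab (io_rule ar d) = {#}"
proof (cases d)
  case (IOSetup j \<rho>)
  with assms(2) have "\<rho> \<in> Renv" "\<exists>F\<in>#concl \<rho>. fsym F = Setup i"
    by (auto simp: iodescs_def setup_rules_def)
  with pf assms(1) have "lab \<rho> = {#}"
    unfolding protocol_format_def by blast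
  with IOSetup show ?thesis by (simp add: lift_rule_def lab_def)
qed (simp_all add: in_rule_def out_rule_def lab_def)


text \<open>In the I/O case only groundness of the instantiation is recorded: that is all \<open>\<Lambda>\<close>
  requires, and it avoids showing that the thread variable of a setup rule is of fresh sort.\<close>
lemma role_rid_step_cases:
  assumes i: "i \<in> {1..n}"
    and step: "msr_step (xper per) E (R_role_rid n cls Sin Sout Setup ar Renv Rr i rid) S a S'"
  obtains (internal) "msr_step (xper per) E Rintf S a S'" and "\<not> sync_label a"
    | (io) d \<theta> where "d \<in> iodescs n Sin Sout Setup Renv i" and "\<forall>x. ground (\<theta> x)"
        and "rule_step (xper per) E (role_io ar d) \<theta> S a S'"
proof -
  from step obtain \<rho> x \<theta> where mem: "(\<rho>, x) \<in> R_role_tid n cls Sin Sout Setup ar Renv Rr i"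
    and \<theta>: "ground_subst \<theta>"
    and st: "rule_step (xper per) E \<rho> (\<lambda>v. subst \<theta> (fix_tid x rid v)) S a S'"
    unfolding msr_step_iff_rule_step R_role_rid_def by (auto simp: rule_step_subst_rule)
  from mem consider (rule) \<rho>0 where "\<rho> = Rprime n cls Sin Sout Setup i \<rho>0" "x = tid cls i \<rho>0" "\<rho>0 \<in> Rr i"
    | (io_rule) d where "\<rho> = role_io ar d" "d \<in> iodescs n Sin Sout Setup Renv i"
    unfolding R_role_tid_def by blast
  then show thesis
  proof cases
    case rule
    with i have "ground_subst (\<lambda>v. subst \<theta> (fix_tid x rid v))"
      using \<theta> tid_fresh by (simp add: ground_subst_comp_fix_tid)
    moreover have "\<rho> \<in> Rintf"
      using rule i unfolding R_intf_def by blast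
    ultimately have "msr_step (xper per) E Rintf S a S'"
      using st unfolding msr_step_iff_rule_step by blast
    moreover have "\<not> sync_label a"
      using rule_step_not_sync_label[OF st] rule(1) Lam_notin_lab_Rprime by blast
    ultimately show thesis by (rule internal)
  next
    case io_rule
    then show thesis
      using st ground_comp_fix_tid[OF \<theta>]
      by (intro io[of d "\<lambda>v. subst \<theta> (fix_tid x rid v)"]) simp_all
  qed
qed

lemma env_step_cases:
  assumes step: "msr_step (xper per) E (R_env_e n Sin Sout Setup ar Renv) S a S'"
  obtains (internal) "msr_step (xper per) E Rintf S a S'" and "\<not> sync_label a"
    | (io) i d \<theta> where "i \<in> {1..n}" and "d \<in> iodescs n Sin Sout Setup Renv i" and "ground_subst \<theta>"
        and "rule_step (xper per) E (env_io ar d) \<theta> S a S'"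
proof -
  from step obtain \<rho> \<theta> where mem: "\<rho> \<in> R_env_e n Sin Sout Setup ar Renv"
    and \<theta>: "ground_subst \<theta>" and st: "rule_step (xper per) E \<rho> \<theta> S a S'"
    unfolding msr_step_iff_rule_step by blast
  from mem consider (rule) \<rho>0 where "\<rho> = lift_rule \<rho>0" "\<rho>0 \<in> Renv_minus n Setup Renv"
    | (io_rule) i d where "i \<in> {1..n}" "d \<in> iodescs n Sin Sout Setup Renv i" "\<rho> = env_io ar d"
    unfolding R_env_e_def by blast
  then show thesis
  proof cases
    case rule
    then have "msr_step (xper per) E Rintf S a S'"
      using \<theta> st unfolding msr_step_iff_rule_step R_intf_def by blast
    moreover have "\<not> sync_label a"
      using rule_step_not_sync_label[OF st] rule(1) Lam_notin_lab_lift_rule by blast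
    ultimately show thesis by (rule internal)
  next
    case io_rule
    then show thesis
      using io st \<theta> by blast
  qed
qed

lemma lam_label_step_sync_label:
  assumes "i \<in> {1..n}" and "d \<in> iodescs n Sin Sout Setup Renv i" and "\<forall>x. ground (\<theta> x)"
    and "lab \<rho> = lam_label ar d" and "rule_step (xper per) E \<rho> \<theta> S a S'"
  shows "sync_label a"
proof -
  from assms(4,5) have "eq_ms E a (subst_ms \<theta> (lam_label ar d))"
    unfolding rule_step_def by metis
  moreover have "subst_ms \<theta> (lam_label ar d) \<in> Lambda n Sin Sout Setup ar Renv"
    using assms(1-3) by (rule subst_lam_label_in_Lambda)
  ultimately show ?thesis by blast
qed

text \<open>The role and environment parts of an I/O rule share the label \<open>\<lambda>\<^sub>\<rho>(y)\<close>, which lists all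
  variables of the rule; hence the two instantiations agree up to E, and together they form an
  instance of the I/O rule itself.\<close>
lemma io_rule_step_of_parts:
  assumes i: "i \<in> {1..n}" and d: "d \<in> iodescs n Sin Sout Setup Renv i" and "ground_subst \<theta>e"
    and role: "rule_step (xper per) E (role_io ar d) \<theta>r S1 a S1'"
    and env: "rule_step (xper per) E (env_io ar d) \<theta>e S2 a S2'"
  shows "msr_step (xper per) E Rintf (S1 + S2) {#} (S1' + S2')"
proof -
  have "eq_ms E (subst_ms \<theta>r (lam_label ar d)) (subst_ms \<theta>e (lam_label ar d))"
    using role env eq_ms_sym[OF E] eq_ms_trans[OF E]
    unfolding rule_step_def lab_role_io lab_env_io by blast
  then have "E (\<theta>r v) (\<theta>e v)" if "v \<in> vars_rule (role_io ar d)" for v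
    using that vars_rule_role_io eq_ms_lam_label_agree by blast
  then have "rule_step (xper per) E (role_io ar d) \<theta>e S1 a S1'"
    using role by (rule rule_step_cong_E[OF E])
  then have "rule_step (xper per) E (io_rule ar d) \<theta>e (S1 + S2) {#} (S1' + S2')"
    using env prem_io_rule_split concl_io_rule_split lab_io_rule[OF i d] by (rule rule_step_merge)
  moreover have "io_rule ar d \<in> Rintf"
    using i d unfolding R_intf_def R_io_def by blast
  ultimately show ?thesis
    using \<open>ground_subst \<theta>e\<close> unfolding msr_step_iff_rule_step by blast
qed

lemma sync_step_in_R_intf:
  assumes "sync_label a" and i: "i \<in> {1..n}"
    and role_step: "msr_step (xper per) E (R_role_rid n cls Sin Sout Setup ar Renv Rr i rid) S1 a S1'"
    and env_step: "msr_step (xper per) E (R_env_e n Sin Sout Setup ar Renv) S2 a S2'"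
  shows "msr_step (xper per) E Rintf (S1 + S2) {#} (S1' + S2')"
proof -
  obtain d \<theta>r where d: "d \<in> iodescs n Sin Sout Setup Renv i"
    and role: "rule_step (xper per) E (role_io ar d) \<theta>r S1 a S1'"
  proof (cases rule: role_rid_step_cases[OF i role_step, case_names internal io])
    case internal
    with \<open>sync_label a\<close> show ?thesis by blast
  qed
  obtain d' \<theta>e where "ground_subst \<theta>e" and env: "rule_step (xper per) E (env_io ar d') \<theta>e S2 a S2'"
  proof (cases rule: env_step_cases[OF env_step, case_names internal io])
    case internal
    with \<open>sync_label a\<close> show ?thesis by blast
  qed
  have "{#Lam d#} = {#Lam d'#}"
    using rule_step_fsym_lab[OF role] rule_step_fsym_lab[OF env] by (simp add: lab_role_io lab_env_io)
  with env have "rule_step (xper per) E (env_io ar d) \<theta>e S2 a S2'" by simp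
  with i d \<open>ground_subst \<theta>e\<close> role show ?thesis
    by (rule io_rule_step_of_parts)
qed

lemma role_step_in_R_intf:
  assumes "\<not> sync_label a" and i: "i \<in> {1..n}"
    and step: "msr_step (xper per) E (R_role_rid n cls Sin Sout Setup ar Renv Rr i rid) S a S'"
  shows "msr_step (xper per) E Rintf S a S'"
proof (cases rule: role_rid_step_cases[OF i step, case_names internal io])
  case (io d \<theta>)
  then have "sync_label a"
    by (intro lam_label_step_sync_label[OF i, of d \<theta> "role_io ar d"]) (simp_all add: lab_role_io)
  with \<open>\<not> sync_label a\<close> show ?thesis by blast
qed

lemma env_step_in_R_intf:
  assumes "\<not> sync_label a"
    and step: "msr_step (xper per) E (R_env_e n Sin Sout Setup ar Renv) S a S'"
  shows "msr_step (xper per) E Rintf S a S'"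
proof (cases rule: env_step_cases[OF step, case_names internal io])
  case (io i d \<theta>)
  then have "sync_label a"
    by (intro lam_label_step_sync_label[of i d \<theta> "env_io ar d"])
      (simp_all add: lab_env_io ground_subst_def)
  with \<open>\<not> sync_label a\<close> show ?thesis by blast
qed

lemma sync_step_simulated:
  assumes step: "lts_step (sync (eq_ms E) (Lambda n Sin Sout Setup ar Renv)
             (interleave ({1..n} \<times> UNIV)
                (\<lambda>(i, rid). msr_lts (xper per) E (R_role_rid n cls Sin Sout Setup ar Renv Rr i rid)))
             (msr_lts (xper per) E (R_env_e n Sin Sout Setup ar Renv))) (f, S) a (f', S')"
    and fin: "finite {k. f k \<noteq> {#}}"
  shows "finite {k. f' k \<noteq> {#}} \<and> msr_step (xper per) E Rintf (S + Sum_any f) a (S' + Sum_any f')"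
proof -
  from step consider
      (sync) a' i rid T where "a = {#}" "sync_label a'" "i \<in> {1..n}"
        "msr_step (xper per) E (R_role_rid n cls Sin Sout Setup ar Renv Rr i rid) (f (i, rid)) a' T"
        "msr_step (xper per) E (R_env_e n Sin Sout Setup ar Renv) S a' S'" "f' = f((i, rid) := T)"
    | (role) i rid T where "\<not> sync_label a" "i \<in> {1..n}"
        "msr_step (xper per) E (R_role_rid n cls Sin Sout Setup ar Renv Rr i rid) (f (i, rid)) a T"
        "S' = S" "f' = f((i, rid) := T)"
    | (env) "\<not> sync_label a" "msr_step (xper per) E (R_env_e n Sin Sout Setup ar Renv) S a S'" "f' = f"
    unfolding sync_def interleave_def msr_lts_def by (auto simp: Bex_def) blast+
  then show ?thesis
  proof cases
    case sync
    then have "msr_step (xper per) E Rintf (f (i, rid) + S) {#} (T + S')"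
      by (intro sync_step_in_R_intf)
    then show ?thesis
      unfolding sync(1,6) using msr_step_thread_update[OF fin] by blast
  next
    case role
    then have "msr_step (xper per) E Rintf (f (i, rid) + S) a (T + S)"
      by (intro msr_step_frame role_step_in_R_intf)
    then show ?thesis
      unfolding role(4,5) using msr_step_thread_update[OF fin] by blast
  next
    case env
    then have "msr_step (xper per) E Rintf S a S'"
      by (intro env_step_in_R_intf)
    with fin env(3) show ?thesis
      by (simp add: msr_step_frame)
  qed
qed

end

theorem lemma2:
  fixes n :: nat
    and per :: "'s \<Rightarrow> bool"
    and cls :: "'s \<Rightarrow> symclass"
    and Sin Sout :: "'s set"
    and K Fr In Out :: 's
    and Setup :: "nat \<Rightarrow> 's"
    and ar :: "'s \<Rightarrow> nat"
    and Renv :: "('s,'f,'n) rule set"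
    and Rr :: "nat \<Rightarrow> ('s,'f,'n) rule set"
    and E :: "('f,'n) trm \<Rightarrow> ('f,'n) trm \<Rightarrow> bool"
  assumes "finite (UNIV :: 'f set)"
    and "equational_theory E"
    and "protocol_format n per cls Sin Sout K Fr In Out Setup ar Renv Rr"
  shows "Tr (sync (eq_ms E) (Lambda n Sin Sout Setup ar Renv)
             (interleave ({1..n} \<times> UNIV)
                (\<lambda>(i, rid). msr_lts (xper per) E (R_role_rid n cls Sin Sout Setup ar Renv Rr i rid)))
             (msr_lts (xper per) E (R_env_e n Sin Sout Setup ar Renv)))
         \<subseteq> Tr (msr_lts (xper per) E (R_intf n cls Sin Sout Setup ar Renv Rr))"
proof -
  interpret msr_protocol n per cls Sin Sout K Fr In Out Setup ar Renv Rr E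
    using assms(2,3) by unfold_locales
  show ?thesis
  proof (rule Tr_subset_if_simulation[where Rel = merged_state], goal_cases init step)
    case init
    show ?case
      by (simp add: merged_state_def sync_def interleave_def msr_lts_def case_prod_unfold)
  next
    case (step s S\<^sub>0 a s')
    then show ?case
      using sync_step_simulated by (cases s; cases s') (auto simp: merged_state_def msr_lts_def)
  qed
qed

end
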